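(* Let $L$ be either $\mathbf{IL}^-(\mathbf{J2}_{+})$ or $\mathbf{CL}$. For any modal formula $A$ the following are equivalent: (i) $L\vdash A$; (ii) $A$ is valid in all simplified $L$-frames; (iii) $A$ is valid in all finite simplified $L$-frames. In particular, $\mathbf{CL}$ has the finite model property with respect to simplified $\mathbf{CL}$-frames.
   Context: Modal formulas are built from propositional variables, $\top$, $\bot$ using $\to,\lor,\land$, unary $\Box$ and binary $\rhd$; $\lnot A:=A\to\bot$, $\Diamond A:=\lnot\Box\lnot A$. The logic $\mathbf{IL}^-$ has as axioms all tautologies, $\Box(A\to B)\to(\Box A\to\Box B)$, $\Box(\Box A\to A)\to\Box A$, $(A\rhd C)\land(B\rhd C)\to(A\lor B)\rhd C$, and $\Box\lnot A\leftrightarrow A\rhd\bot$; its rules are modus ponens, necessitation, from $A\to B$ infer $C\rhd A\to C\rhd B$, and from $A\to B$ infer $B\rhd C\to A\rhd C$. $\mathbf{IL}^-(\mathbf{J2}_{+})$ is $\mathbf{IL}^-$ plus the axiom scheme $\mathbf{J2}_{+}$: $A\rhd(B\lor C)\land B\rhd C\to A\rhd C$. The logic $\mathbf{CL}$ has axioms: all tautologies, $\Box(A\to B)\to(\Box A\to\Box B)$, $\Box(\Box A\to A)\to\Box A$, $\Box(A\to B)\to A\rhd B$, $(A\rhd B)\land(B\rhd C)\to A\rhd C$, $(A\rhd C)\land(B\rhd C)\to(A\lor B)\rhd C$, $A\rhd B\to(\Diamond A\to\Diamond B)$, with rules modus ponens and necessitation. A simplified frame is $(W,R,S)$ with $W$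 non-empty, $R$ a transitive, conversely well-founded binary relation on $W$, $S$ a binary relation on $W$; it is finite if $W$ is. Forcing: arbitrary on variables, Boolean clauses as usual, $x\Vdash\Box A$ iff $y\Vdash A$ for all $y$ with $xRy$, and $x\Vdash A\rhd B$ iff for every $y$ with $xRy$ and $y\Vdash A$ there is $z$ with $xRz$, $ySz$, $z\Vdash B$. $A$ is valid in a frame if it is forced at every point under every forcing relation. A simplified $\mathbf{IL}^-(\mathbf{J2}_{+})$-frame is a simplified frame with $S$ transitive; a simplified $\mathbf{CL}$-frame is a simplified frame with $S$ reflexive and transitive. *)

theory Defs
  imports Main
begin

datatype fm =
    Var nat
  | Top
  | Bot
  | Imp fm fm
  | Or fm fm
  | And fm fm
  | Box fm
  | Rhd fm fm

definition Neg :: "fm \<Rightarrow> fm" where "Neg A = Imp A Bot"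
definition Dia :: "fm \<Rightarrow> fm" where "Dia A = Neg (Box (Neg A))"
definition Iff :: "fm \<Rightarrow> fm \<Rightarrow> fm" where "Iff A B = And (Imp A B) (Imp B A)"

fun peval :: "(fm \<Rightarrow> bool) \<Rightarrow> fm \<Rightarrow> bool" where
  "peval v (Var p) = v (Var p)"
| "peval v Top = True"
| "peval v Bot = False"
| "peval v (Imp A B) = (peval v A \<longrightarrow> peval v B)"
| "peval v (Or A B) = (peval v A \<or> peval v B)"
| "peval v (And A B) = (peval v A \<and> peval v B)"
| "peval v (Box A) = v (Box A)"
| "peval v (Rhd A B) = v (Rhd A B)"

definition tautology :: "fm \<Rightarrow> bool" where
  "tautology A \<longleftrightarrow> (\<forall>v. peval v A)"

datatype logic = IL_J2plus | CL

inductive ILJ2_prov :: "fm \<Rightarrow> bool" where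
  taut: "tautology A \<Longrightarrow> ILJ2_prov A"
| K: "ILJ2_prov (Imp (Box (Imp A B)) (Imp (Box A) (Box B)))"
| L: "ILJ2_prov (Imp (Box (Imp (Box A) A)) (Box A))"
| J3: "ILJ2_prov (Imp (And (Rhd A C) (Rhd B C)) (Rhd (Or A B) C))"
| J4m: "ILJ2_prov (Iff (Box (Neg A)) (Rhd A Bot))"
| J2plus: "ILJ2_prov (Imp (And (Rhd A (Or B C)) (Rhd B C)) (Rhd A C))"
| MP: "ILJ2_prov (Imp A B) \<Longrightarrow> ILJ2_prov A \<Longrightarrow> ILJ2_prov B"
| Nec: "ILJ2_prov A \<Longrightarrow> ILJ2_prov (Box A)"
| R1: "ILJ2_prov (Imp A B) \<Longrightarrow> ILJ2_prov (Imp (Rhd C A) (Rhd C B))"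
| R2: "ILJ2_prov (Imp A B) \<Longrightarrow> ILJ2_prov (Imp (Rhd B C) (Rhd A C))"

inductive CL_prov :: "fm \<Rightarrow> bool" where
  taut: "tautology A \<Longrightarrow> CL_prov A"
| K: "CL_prov (Imp (Box (Imp A B)) (Imp (Box A) (Box B)))"
| L: "CL_prov (Imp (Box (Imp (Box A) A)) (Box A))"
| J1: "CL_prov (Imp (Box (Imp A B)) (Rhd A B))"
| J2: "CL_prov (Imp (And (Rhd A B) (Rhd B C)) (Rhd A C))"
| J3: "CL_prov (Imp (And (Rhd A C) (Rhd B C)) (Rhd (Or A B) C))"
| J4: "CL_prov (Imp (Rhd A B) (Imp (Dia A) (Dia B)))"
| MP: "CL_prov (Imp A B) \<Longrightarrow> CL_prov A \<Longrightarrow> CL_prov B"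
| Nec: "CL_prov A \<Longrightarrow> CL_prov (Box A)"

fun prov :: "logic \<Rightarrow> fm \<Rightarrow> bool" where
  "prov IL_J2plus A = ILJ2_prov A"
| "prov CL A = CL_prov A"

definition simplified_frame :: "'w set \<Rightarrow> 'w rel \<Rightarrow> 'w rel \<Rightarrow> bool" where
  "simplified_frame W R S \<longleftrightarrow>
     W \<noteq> {} \<and> R \<subseteq> W \<times> W \<and> S \<subseteq> W \<times> W \<and> trans R \<and> wf (R\<inverse>)"

fun L_frame :: "logic \<Rightarrow> 'w set \<Rightarrow> 'w rel \<Rightarrow> 'w rel \<Rightarrow> bool" where
  "L_frame IL_J2plus W R S \<longleftrightarrow> simplified_frame W R S \<and> trans S"
| "L_frame CL W R S \<longleftrightarrow> simplified_frame W R S \<and> refl_on W S \<and> trans S"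

fun forces :: "'w rel \<Rightarrow> 'w rel \<Rightarrow> (nat \<Rightarrow> 'w \<Rightarrow> bool) \<Rightarrow> 'w \<Rightarrow> fm \<Rightarrow> bool" where
  "forces R S V x (Var p) = V p x"
| "forces R S V x Top = True"
| "forces R S V x Bot = False"
| "forces R S V x (Imp A B) = (forces R S V x A \<longrightarrow> forces R S V x B)"
| "forces R S V x (Or A B) = (forces R S V x A \<or> forces R S V x B)"
| "forces R S V x (And A B) = (forces R S V x A \<and> forces R S V x B)"
| "forces R S V x (Box A) = (\<forall>y. (x, y) \<in> R \<longrightarrow> forces R S V y A)"
| "forces R S V x (Rhd A B) =
     (\<forall>y. (x, y) \<in> R \<and> forces R S V y A \<longrightarrow>
        (\<exists>z. (x, z) \<in> R \<and> (y, z) \<in> S \<and> forces R S V z B))"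

definition valid_in :: "'w set \<Rightarrow> 'w rel \<Rightarrow> 'w rel \<Rightarrow> fm \<Rightarrow> bool" where
  "valid_in W R S A \<longleftrightarrow> (\<forall>V. \<forall>x\<in>W. forces R S V x A)"

definition valid_all_frames :: "logic \<Rightarrow> 'w itself \<Rightarrow> fm \<Rightarrow> bool" where
  "valid_all_frames L (_ :: 'w itself) A \<longleftrightarrow>
     (\<forall>(W :: 'w set) R S. L_frame L W R S \<longrightarrow> valid_in W R S A)"

definition valid_finite_frames :: "logic \<Rightarrow> 'w itself \<Rightarrow> fm \<Rightarrow> bool" where
  "valid_finite_frames L (_ :: 'w itself) A \<longleftrightarrow>
     (\<forall>(W :: 'w set) R S. L_frame L W R S \<and> finite W \<longrightarrow> valid_in W R S A)"

end

theory Submission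
  imports Defs
begin

text \<open>Soundness is checked rule by rule: Loeb's axiom needs \<open>R\<close> transitive and conversely
  well-founded, \<open>J2\<^sub>+\<close> and \<open>J2\<close> need \<open>S\<close> transitive, and \<open>J1\<close> needs \<open>S\<close> reflexive.

  For completeness, an unprovable \<open>A\<close> is refuted in a finite canonical model. Let \<open>\<Phi>\<close> be the
  subformulas of \<open>A\<close> together with \<open>\<bottom>\<close>, and let \<open>\<Psi> \<supseteq> \<Phi>\<close> be subformula closed and contain
  all \<open>\<box>(P \<rightarrow> \<Or>\<Delta> \<or> Q)\<close> with \<open>P, Q \<in> \<Phi>\<close> and \<open>\<Delta>\<close> a sublist of \<open>\<Phi>\<close>. Worlds are
  triples \<open>(\<Gamma>, \<Delta>, E)\<close> of maximal consistent subsets \<open>\<Gamma>, \<Delta>\<close> of \<open>\<Psi>\<close> and \<open>E \<in> \<Phi>\<close>: truth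
  is decided by \<open>\<Delta>\<close>, and if \<open>\<Gamma> \<prec> \<Delta>\<close> then \<open>\<Delta>\<close> is \<open>E\<close>-critical for \<open>\<Gamma>\<close>, i.e.
  \<open>\<Gamma> \<turnstile> A' \<rhd> E\<close> for no \<open>A' \<in> \<Delta> \<inter> \<Phi>\<close>. Here \<open>\<Gamma> \<prec> \<Delta>\<close> says that \<open>\<Delta>\<close> contains \<open>\<box>C\<close>
  and \<open>C\<close> for every \<open>\<box>C \<in> \<Gamma>\<close>, and strictly more boxed formulas than \<open>\<Gamma>\<close>; it induces a
  transitive, conversely well-founded \<open>R\<close>. An \<open>S\<close>-step either keeps \<open>\<Gamma>\<close> and \<open>E\<close> and lands
  outside \<open>E\<close>, or moves to a \<open>\<bottom>\<close>-critical world over a \<open>\<prec>\<close>-smaller \<open>\<Gamma>\<close>; this keeps \<open>S\<close>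
  transitive. The critical successors required by the truth lemma exist because \<open>\<Gamma>\<close> does not entail
  the corresponding boxed formulas of \<open>\<Psi>\<close>, which is where \<open>J2\<^sub>+\<close> (for \<open>CL\<close>: \<open>J1\<close>,
  \<open>J2\<close>, \<open>J4\<close>) is used. The finite countermodel is finally copied onto \<open>\<nat>\<close>.\<close>

section \<open>Soundness\<close>

lemma peval_forces: "peval (forces R S V x) A = forces R S V x A"
  by (induction A) auto

lemma forces_tautology: "tautology A \<Longrightarrow> forces R S V x A"
  unfolding tautology_def by (metis peval_forces)

lemma forces_Loeb:
  assumes "trans R" and "wf (R\<inverse>)"
  shows "forces R S V x (Imp (Box (Imp (Box A) A)) (Box A))"
proof (simp only: forces.simps, rule impI, rule allI)
  fix y
  assume Loeb: "\<forall>y. (x, y) \<in> R \<longrightarrow> (\<forall>z. (y, z) \<in> R \<longrightarrow> forces R S V z A) \<longrightarrow> forces R S V y A"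
  show "(x, y) \<in> R \<longrightarrow> forces R S V y A"
    using \<open>wf (R\<inverse>)\<close>
  proof (induction y rule: wf_induct_rule)
    case (less y)
    then show ?case
      using Loeb \<open>trans R\<close> by (blast dest: transD)
  qed
qed

lemma forces_Rhd_mono_right:
  assumes "\<And>z. (x, z) \<in> R \<Longrightarrow> forces R S V z A \<Longrightarrow> forces R S V z B"
    and "forces R S V x (Rhd C A)"
  shows "forces R S V x (Rhd C B)"
  using assms by fastforce

lemma forces_Rhd_mono_left:
  assumes "\<And>y. (x, y) \<in> R \<Longrightarrow> forces R S V y A \<Longrightarrow> forces R S V y B"
    and "forces R S V x (Rhd B C)"
  shows "forces R S V x (Rhd A C)"
  using assms by simp

lemma ILJ2_prov_valid:
  assumes "ILJ2_prov A" and "L_frame IL_J2plus W R S"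
  shows "valid_in W R S A"
proof -
  have "trans R" "wf (R\<inverse>)" "trans S" and RW: "\<And>x y. (x, y) \<in> R \<Longrightarrow> y \<in> W"
    using assms(2) by (auto simp: simplified_frame_def)
  show ?thesis
    using assms(1) unfolding valid_in_def
  proof (induction A rule: ILJ2_prov.induct)
    case (taut A)
    then show ?case by (simp add: forces_tautology)
  next
    case (L A)
    show ?case using forces_Loeb[OF \<open>trans R\<close> \<open>wf (R\<inverse>)\<close>] by blast
  next
    case (J4m A)
    show ?case by (auto simp: Iff_def Neg_def)
  next
    case (J2plus A B C)
    show ?case
      using \<open>trans S\<close> by (simp del: forces.simps(7)) (meson transD)
  next
    case (Nec A)
    then show ?case using RW by simp
  next
    case (R1 A B C)
    then show ?case using RW forces_Rhd_mono_right[of _ R S _ A B C] by simp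
  next
    case (R2 A B C)
    then show ?case using RW forces_Rhd_mono_left[of _ R S _ A B C] by simp
  qed auto
qed

lemma CL_prov_valid:
  assumes "CL_prov A" and "L_frame CL W R S"
  shows "valid_in W R S A"
proof -
  have "trans R" "wf (R\<inverse>)" "trans S" "refl_on W S" and RW: "\<And>x y. (x, y) \<in> R \<Longrightarrow> y \<in> W"
    using assms(2) by (auto simp: simplified_frame_def)
  show ?thesis
    using assms(1) unfolding valid_in_def
  proof (induction A rule: CL_prov.induct)
    case (taut A)
    then show ?case by (simp add: forces_tautology)
  next
    case (L A)
    show ?case using forces_Loeb[OF \<open>trans R\<close> \<open>wf (R\<inverse>)\<close>] by blast
  next
    case (J1 A B)
    show ?case using \<open>refl_on W S\<close> RW by simp (meson refl_onD)
  next
    case (J2 A B C)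
    show ?case
      using \<open>trans S\<close> by (simp del: forces.simps(7)) (meson transD)
  next
    case (J4 A B)
    show ?case by (auto simp: Dia_def Neg_def)
  next
    case (Nec A)
    then show ?case using RW by simp
  qed auto
qed

lemma prov_valid_in: "prov L A \<Longrightarrow> L_frame L W R S \<Longrightarrow> valid_in W R S A"
  by (cases L) (auto intro: ILJ2_prov_valid CL_prov_valid)

lemma prov_valid_all_frames: "prov L A \<Longrightarrow> valid_all_frames L TYPE('w) A"
  unfolding valid_all_frames_def using prov_valid_in by blast

section \<open>Copying frames along injections\<close>

lemma L_frame_imp_simplified_frame: "L_frame L W R S \<Longrightarrow> simplified_frame W R S"
  by (cases L) auto

lemma L_frame_imp_trans: "L_frame L W R S \<Longrightarrow> trans S"
  by (cases L) auto

lemma in_map_prod_image_iff: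
  assumes "inj_on f W" and "T \<subseteq> W \<times> W" and "a \<in> W"
  shows "(f a, m) \<in> map_prod f f ` T \<longleftrightarrow> (\<exists>b. (a, b) \<in> T \<and> m = f b)"
proof
  assume "(f a, m) \<in> map_prod f f ` T"
  then obtain a' b where ab: "(a', b) \<in> T" "f a' = f a" "m = f b" by auto
  then have "a' = a"
    using assms by (auto dest: inj_onD)
  with ab show "\<exists>b. (a, b) \<in> T \<and> m = f b" by blast
qed auto

lemma map_prod_image_iff:
  assumes "inj_on f W" and "T \<subseteq> W \<times> W" and "a \<in> W" and "b \<in> W"
  shows "(f a, f b) \<in> map_prod f f ` T \<longleftrightarrow> (a, b) \<in> T"
  using assms by (auto simp: in_map_prod_image_iff dest: inj_onD)

lemma trans_map_prod_image:
  assumes inj: "inj_on f W" and "T \<subseteq> W \<times> W" and "trans T"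
  shows "trans (map_prod f f ` T)"
proof (rule transI)
  fix a b c
  assume "(a, b) \<in> map_prod f f ` T" and "(b, c) \<in> map_prod f f ` T"
  then obtain a0 b0 b1 c0
    where "(a0, b0) \<in> T" "(b1, c0) \<in> T" "a = f a0" "b = f b0" "b = f b1" "c = f c0"
    by auto
  moreover from this have "b0 = b1"
    using assms(2) inj_onD[OF inj] by blast
  ultimately show "(a, c) \<in> map_prod f f ` T"
    using \<open>trans T\<close> by (blast dest: transD)
qed

lemma forces_map_prod_image:
  fixes V :: "nat \<Rightarrow> 'a \<Rightarrow> bool"
  assumes inj: "inj_on f W" and R: "R \<subseteq> W \<times> W" and S: "S \<subseteq> W \<times> W" and "x \<in> W"
  defines "V' \<equiv> \<lambda>p y. V p (the_inv_into W f y)"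
  shows "forces (map_prod f f ` R) (map_prod f f ` S) V' (f x) A \<longleftrightarrow> forces R S V x A"
  using \<open>x \<in> W\<close>
proof (induction A arbitrary: x)
  case (Var p)
  then show ?case using inj by (simp add: V'_def the_inv_into_f_f)
next
  case (Box A)
  let ?F' = "forces (map_prod f f ` R) (map_prod f f ` S) V'"
  have "?F' (f x) (Box A) \<longleftrightarrow> (\<forall>y. (x, y) \<in> R \<longrightarrow> ?F' (f y) A)"
    by (auto simp: in_map_prod_image_iff[OF inj R Box.prems])
  also have "\<dots> \<longleftrightarrow> forces R S V x (Box A)"
    using Box.IH R by auto
  finally show ?case .
next
  case (Rhd A B)
  let ?F' = "forces (map_prod f f ` R) (map_prod f f ` S) V'"
  have all_R: "(\<forall>m. (f x, m) \<in> map_prod f f ` R \<longrightarrow> P m) \<longleftrightarrow> (\<forall>y. (x, y) \<in> R \<longrightarrow> P (f y))"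
    and ex_R: "(\<exists>m. (f x, m) \<in> map_prod f f ` R \<and> P m) \<longleftrightarrow> (\<exists>y. (x, y) \<in> R \<and> P (f y))" for P
    by (auto simp: in_map_prod_image_iff[OF inj R Rhd.prems])
  have "?F' (f x) (Rhd A B) \<longleftrightarrow> (\<forall>y. (x, y) \<in> R \<longrightarrow> ?F' (f y) A \<longrightarrow>
      (\<exists>z. (x, z) \<in> R \<and> (f y, f z) \<in> map_prod f f ` S \<and> ?F' (f z) B))"
    by (simp only: forces.simps imp_conjL all_R ex_R)
  also have "\<dots> \<longleftrightarrow> forces R S V x (Rhd A B)"
  proof -
    have RW: "(x, y) \<in> R \<Longrightarrow> y \<in> W" for y
      using R by blast
    note IH = Rhd.IH(1)[OF RW] Rhd.IH(2)[OF RW] map_prod_image_iff[OF inj S RW RW]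
    show ?thesis
      by (simp add: IH imp_conjL cong: imp_cong conj_cong)
  qed
  finally show ?case .
qed simp_all

lemma L_frame_map_prod_image:
  assumes "L_frame L W R S" and inj: "inj_on f W"
  shows "L_frame L (f ` W) (map_prod f f ` R) (map_prod f f ` S)"
proof -
  have "W \<noteq> {}" and R: "R \<subseteq> W \<times> W" and S: "S \<subseteq> W \<times> W" and "trans R" "wf (R\<inverse>)"
    using L_frame_imp_simplified_frame[OF assms(1)] unfolding simplified_frame_def by blast+
  have "(map_prod f f ` R)\<inverse> = map_prod f f ` (R\<inverse>)"
    by auto
  moreover have "wf (map_prod f f ` (R\<inverse>))"
    using \<open>wf (R\<inverse>)\<close> R inj_onD[OF inj] by (intro wf_map_prod_image_Dom_Ran) blast+
  ultimately have "simplified_frame (f ` W) (map_prod f f ` R) (map_prod f f ` S)"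
    using \<open>W \<noteq> {}\<close> R S trans_map_prod_image[OF inj R \<open>trans R\<close>]
    unfolding simplified_frame_def by auto
  moreover have "refl_on (f ` W) (map_prod f f ` S)" if "refl_on W S"
    using that S unfolding refl_on_def by auto
  ultimately show ?thesis
    using assms(1) trans_map_prod_image[OF inj S L_frame_imp_trans[OF assms(1)]] by (cases L) auto
qed

lemma valid_in_map_prod_image:
  assumes "L_frame L W R S" and inj: "inj_on f W"
    and valid: "valid_in (f ` W) (map_prod f f ` R) (map_prod f f ` S) A"
  shows "valid_in W R S A"
  unfolding valid_in_def
proof (intro allI ballI)
  fix V x
  assume "x \<in> W"
  have "R \<subseteq> W \<times> W" "S \<subseteq> W \<times> W"
    using L_frame_imp_simplified_frame[OF assms(1)] unfolding simplified_frame_def by blast+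
  moreover have "forces (map_prod f f ` R) (map_prod f f ` S)
      (\<lambda>p y. V p (the_inv_into W f y)) (f x) A"
    using valid \<open>x \<in> W\<close> unfolding valid_in_def by blast
  ultimately show "forces R S V x A"
    using forces_map_prod_image[OF inj _ _ \<open>x \<in> W\<close>] by blast
qed

lemma valid_finite_frames_nat_imp_valid_in:
  assumes valid: "valid_finite_frames L TYPE(nat) A" and "L_frame L W R S" and "finite W"
  shows "valid_in W R S A"
proof -
  obtain f :: "'a \<Rightarrow> nat" where inj: "inj_on f W"
    using finite_imp_inj_to_nat_seg[OF \<open>finite W\<close>] by blast
  have "valid_in (f ` W) (map_prod f f ` R) (map_prod f f ` S) A"
    using valid L_frame_map_prod_image[OF assms(2) inj] \<open>finite W\<close>
    unfolding valid_finite_frames_def by blast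
  then show ?thesis
    using valid_in_map_prod_image[OF assms(2) inj] by blast
qed

lemma prov_taut: "tautology A \<Longrightarrow> prov L A"
  by (cases L) (auto intro: ILJ2_prov.taut CL_prov.taut)

lemma prov_mp: "prov L (Imp A B) \<Longrightarrow> prov L A \<Longrightarrow> prov L B"
  by (cases L) (auto intro: ILJ2_prov.MP CL_prov.MP)

lemma prov_nec: "prov L A \<Longrightarrow> prov L (Box A)"
  by (cases L) (auto intro: ILJ2_prov.Nec CL_prov.Nec)

lemma prov_K: "prov L (Imp (Box (Imp A B)) (Imp (Box A) (Box B)))"
  by (cases L) (auto intro: ILJ2_prov.K CL_prov.K)

lemma prov_Loeb: "prov L (Imp (Box (Imp (Box A) A)) (Box A))"
  by (cases L) (auto intro: ILJ2_prov.L CL_prov.L)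

lemma prov_J3: "prov L (Imp (And (Rhd A C) (Rhd B C)) (Rhd (Or A B) C))"
  by (cases L) (auto intro: ILJ2_prov.J3 CL_prov.J3)

lemma prov_taut_mp: "prov L A \<Longrightarrow> tautology (Imp A B) \<Longrightarrow> prov L B"
  using prov_mp prov_taut by blast

lemma prov_taut_mp2:
  "prov L A \<Longrightarrow> prov L B \<Longrightarrow> tautology (Imp A (Imp B C)) \<Longrightarrow> prov L C"
  using prov_mp prov_taut by blast

lemma prov_taut_mp3:
  "prov L A \<Longrightarrow> prov L B \<Longrightarrow> prov L C \<Longrightarrow> tautology (Imp A (Imp B (Imp C D))) \<Longrightarrow> prov L D"
  using prov_mp prov_taut by blast

lemma prov_taut_mp4:
  "prov L A \<Longrightarrow> prov L B \<Longrightarrow> prov L C \<Longrightarrow> prov L D \<Longrightarrow>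
    tautology (Imp A (Imp B (Imp C (Imp D E)))) \<Longrightarrow> prov L E"
  using prov_mp prov_taut by blast

lemma prov_box_mono: "prov L (Imp A B) \<Longrightarrow> prov L (Imp (Box A) (Box B))"
  using prov_mp prov_nec prov_K by blast

lemma prov_box_conj: "prov L (Imp (Box A) (Imp (Box B) (Box (And A B))))"
proof -
  have "prov L (Imp (Box A) (Box (Imp B (And A B))))"
    by (rule prov_box_mono, rule prov_taut) (simp add: tautology_def)
  moreover have "prov L (Imp (Box (Imp B (And A B))) (Imp (Box B) (Box (And A B))))"
    by (rule prov_K)
  ultimately show ?thesis
    by (rule prov_taut_mp2) (simp add: tautology_def)
qed

text \<open>Axiom 4 follows from Loeb's axiom for \<open>A \<and> \<box>A\<close>.\<close>

lemma prov_box_4: "prov L (Imp (Box A) (Box (Box A)))"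
proof -
  let ?B = "And A (Box A)"
  have B_A: "prov L (Imp (Box ?B) (Box A))" and B_BA: "prov L (Imp (Box ?B) (Box (Box A)))"
    by (rule prov_box_mono, rule prov_taut, simp add: tautology_def)+
  have "prov L (Imp A (Imp (Box ?B) ?B))"
    using B_A by (rule prov_taut_mp) (simp add: tautology_def)
  then have "prov L (Imp (Box A) (Box (Imp (Box ?B) ?B)))"
    by (rule prov_box_mono)
  then show ?thesis
    using prov_Loeb[of L ?B] B_BA by (rule prov_taut_mp3) (simp add: tautology_def)
qed

lemmas ILJ2_R1 = ILJ2_prov.R1[folded prov.simps(1)]
lemmas ILJ2_R2 = ILJ2_prov.R2[folded prov.simps(1)]
lemmas ILJ2_J4m = ILJ2_prov.J4m[folded prov.simps(1)]
lemmas ILJ2_J2plus = ILJ2_prov.J2plus[folded prov.simps(1)]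
lemmas CL_J1 = CL_prov.J1[folded prov.simps(2)]
lemmas CL_J2 = CL_prov.J2[folded prov.simps(2)]
lemmas CL_J4 = CL_prov.J4[folded prov.simps(2)]

lemma ILJ2_box_Neg_Rhd: "prov IL_J2plus (Imp (Box (Neg F)) (Rhd F G))"
proof -
  have "prov IL_J2plus (Imp (Rhd F Bot) (Rhd F G))"
    by (rule ILJ2_R1, rule prov_taut) (simp add: tautology_def)
  then show ?thesis
    using ILJ2_J4m[of F] by (rule prov_taut_mp2) (simp add: tautology_def Iff_def)
qed

lemma ILJ2_box_imp_Rhd_right: "prov IL_J2plus (Imp (Box (Imp B X)) (Imp (Rhd A B) (Rhd A X)))"
proof -
  let ?N = "And B (Neg X)"
  have "prov IL_J2plus (Imp (Box (Imp B X)) (Box (Neg ?N)))"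
    by (rule prov_box_mono, rule prov_taut) (simp add: tautology_def Neg_def)
  moreover have "prov IL_J2plus (Imp (Box (Neg ?N)) (Rhd ?N X))"
    by (rule ILJ2_box_Neg_Rhd)
  moreover have "prov IL_J2plus (Imp (Rhd A B) (Rhd A (Or ?N X)))"
    by (rule ILJ2_R1, rule prov_taut) (simp add: tautology_def Neg_def)
  moreover have "prov IL_J2plus (Imp (And (Rhd A (Or ?N X)) (Rhd ?N X)) (Rhd A X))"
    by (rule ILJ2_J2plus)
  ultimately show ?thesis
    by (rule prov_taut_mp4) (simp add: tautology_def)
qed

lemma CL_Rhd_if_imp: "prov CL (Imp A B) \<Longrightarrow> prov CL (Rhd A B)"
  using prov_nec CL_J1 prov_mp by blast

lemma prov_Bot_Rhd: "prov L (Rhd Bot E)"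
proof (cases L)
  case IL_J2plus
  have "prov IL_J2plus (Box (Neg Bot))"
    by (rule prov_nec, rule prov_taut) (simp add: tautology_def Neg_def)
  then show ?thesis
    using ILJ2_box_Neg_Rhd IL_J2plus prov_mp by blast
next
  case CL
  show ?thesis
    unfolding CL by (rule CL_Rhd_if_imp, rule prov_taut) (simp add: tautology_def)
qed

lemma prov_Rhd_self_if_CL: "prov L (Rhd (if L = CL then B else Bot) B)"
proof (cases L)
  case IL_J2plus
  then show ?thesis using prov_Bot_Rhd by simp
next
  case CL
  have "prov CL (Rhd B B)"
    by (rule CL_Rhd_if_imp, rule prov_taut) (simp add: tautology_def)
  then show ?thesis using CL by simp
qed

lemma prov_box_imp_Rhd_left: "prov L (Imp (Box (Imp A X)) (Imp (Rhd X B) (Rhd A B)))"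
proof (cases L)
  case IL_J2plus
  let ?N = "And A (Neg X)"
  have "prov IL_J2plus (Imp (Box (Imp A X)) (Box (Neg ?N)))"
    by (rule prov_box_mono, rule prov_taut) (simp add: tautology_def Neg_def)
  then have "prov IL_J2plus (Imp (Box (Imp A X)) (Rhd ?N B))"
    using ILJ2_box_Neg_Rhd[of ?N B] by (rule prov_taut_mp2) (simp add: tautology_def)
  moreover have "prov IL_J2plus (Imp (Rhd X B) (Rhd (And A X) B))"
    by (rule ILJ2_R2, rule prov_taut) (simp add: tautology_def)
  moreover have "prov IL_J2plus (Imp (And (Rhd ?N B) (Rhd (And A X) B)) (Rhd (Or ?N (And A X)) B))"
    by (rule prov_J3)
  moreover have "prov IL_J2plus (Imp (Rhd (Or ?N (And A X)) B) (Rhd A B))"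
    by (rule ILJ2_R2, rule prov_taut) (simp add: tautology_def Neg_def)
  ultimately show ?thesis
    unfolding IL_J2plus by (rule prov_taut_mp4) (simp add: tautology_def)
next
  case CL
  show ?thesis
    unfolding CL using CL_J1[of A X] CL_J2[of A X B] by (rule prov_taut_mp2) (simp add: tautology_def)
qed

lemma prov_box_Or_Rhd_trans:
  "prov L (Imp (Box (Imp B (Or D E))) (Imp (Rhd A B) (Imp (Rhd D E) (Rhd A E))))"
proof (cases L)
  case IL_J2plus
  show ?thesis
    unfolding IL_J2plus using ILJ2_box_imp_Rhd_right[of B "Or D E" A] ILJ2_J2plus[of A D E]
    by (rule prov_taut_mp2) (simp add: tautology_def)
next
  case CL
  have "prov CL (Rhd E E)"
    by (rule CL_Rhd_if_imp, rule prov_taut) (simp add: tautology_def)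
  then have "prov CL (Imp (Rhd D E) (Rhd (Or D E) E))"
    using prov_J3[of CL D E E] by (rule prov_taut_mp2) (simp add: tautology_def)
  then show ?thesis
    unfolding CL using CL_J1[of B "Or D E"] CL_J2[of B "Or D E" E] CL_J2[of A B E]
    by (rule prov_taut_mp4) (simp add: tautology_def)
qed

lemma prov_Rhd_Bot_box: "prov L (Imp (Rhd A Bot) (Box (Imp A (Or Bot Bot))))"
proof -
  have "prov L (Imp (Box (Neg A)) (Box (Imp A (Or Bot Bot))))"
    by (rule prov_box_mono, rule prov_taut) (simp add: tautology_def Neg_def)
  moreover have "prov L (Imp (Rhd A Bot) (Box (Neg A)))"
  proof (cases L)
    case IL_J2plus
    show ?thesis
      unfolding IL_J2plus using ILJ2_J4m[of A] by (rule prov_taut_mp) (simp add: tautology_def Iff_def)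
  next
    case CL
    have "prov CL (Box (Neg Bot))"
      by (rule prov_nec, rule prov_taut) (simp add: tautology_def Neg_def)
    then show ?thesis
      unfolding CL using CL_J4[of A Bot] by (rule prov_taut_mp2) (simp add: tautology_def Dia_def Neg_def)
  qed
  ultimately show ?thesis
    by (rule prov_taut_mp2) (simp add: tautology_def)
qed

section \<open>Maximal consistent sets\<close>

fun subfms :: "fm \<Rightarrow> fm list" where
  "subfms (Var p) = [Var p]"
| "subfms Top = [Top]"
| "subfms Bot = [Bot]"
| "subfms (Imp A B) = Imp A B # subfms A @ subfms B"
| "subfms (Or A B) = Or A B # subfms A @ subfms B"
| "subfms (And A B) = And A B # subfms A @ subfms B"
| "subfms (Box A) = Box A # subfms A"
| "subfms (Rhd A B) = Rhd A B # subfms A @ subfms B"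

lemma subfms_self [simp]: "F \<in> set (subfms F)"
  by (cases F) auto

lemma subfms_subset: "G \<in> set (subfms F) \<Longrightarrow> set (subfms G) \<subseteq> set (subfms F)"
  by (induction F) auto

primrec Disj :: "fm list \<Rightarrow> fm" where
  "Disj [] = Bot"
| "Disj (F # Fs) = Or F (Disj Fs)"

primrec Conj :: "fm list \<Rightarrow> fm" where
  "Conj [] = Top"
| "Conj (F # Fs) = And F (Conj Fs)"

lemma prov_Conj_imp: "F \<in> set Fs \<Longrightarrow> prov L (Imp (Conj Fs) F)"
proof (induction Fs)
  case (Cons G Fs)
  show ?case
  proof (cases "F = G")
    case True
    then show ?thesis by (simp add: prov_taut tautology_def)
  next
    case False
    then have "prov L (Imp (Conj Fs) F)" using Cons by simp
    then show ?thesis by (rule prov_taut_mp) (simp add: tautology_def)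
  qed
qed simp

definition consistent :: "logic \<Rightarrow> fm \<Rightarrow> bool" where
  "consistent L F \<longleftrightarrow> \<not> prov L (Neg F)"

lemma consistent_mono: "consistent L A \<Longrightarrow> prov L (Imp A B) \<Longrightarrow> consistent L B"
  unfolding consistent_def
  using prov_taut_mp2[of L "Imp A B" "Neg B" "Neg A"] by (auto simp: tautology_def Neg_def)

text \<open>\<open>\<Phi>\<close> is the set of formulas whose truth the canonical model has to get right; the larger
  \<open>\<Psi>\<close> also contains the boxed formulas needed to build successors (as \<open>f\<close> varies,
  \<open>filter f \<Phi>\<close> ranges over all sublists of \<open>\<Phi>\<close>).\<close>

locale adequate_sets =
  fixes L :: logic and \<Phi> \<Psi> :: "fm list"
  assumes distinct_Psi: "distinct \<Psi>"
    and Phi_subset_Psi: "set \<Phi> \<subseteq> set \<Psi>"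
    and Psi_closed: "F \<in> set \<Psi> \<Longrightarrow> set (subfms F) \<subseteq> set \<Psi>"
    and Phi_closed: "F \<in> set \<Phi> \<Longrightarrow> set (subfms F) \<subseteq> set \<Phi>"
    and Bot_in_Phi: "Bot \<in> set \<Phi>"
    and box_witness_in_Psi:
      "P \<in> set \<Phi> \<Longrightarrow> Q \<in> set \<Phi> \<Longrightarrow> Box (Imp P (Or (Disj (filter f \<Phi>)) Q)) \<in> set \<Psi>"
begin

definition lit :: "fm set \<Rightarrow> fm \<Rightarrow> fm" where
  "lit S F = (if F \<in> S then F else Neg F)"

definition chi :: "fm set \<Rightarrow> fm" where
  "chi S = Conj (map (lit S) \<Psi>)"

definition entails :: "fm set \<Rightarrow> fm \<Rightarrow> bool" where
  "entails S F \<longleftrightarrow> prov L (Imp (chi S) F)"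

text \<open>A subset of \<open>\<Psi>\<close> with consistent characteristic formula is exactly a maximal
  consistent subset of \<open>\<Psi>\<close>.\<close>

definition mcs :: "fm set \<Rightarrow> bool" where
  "mcs S \<longleftrightarrow> S \<subseteq> set \<Psi> \<and> consistent L (chi S)"

lemma subfms_in_Psi: "F \<in> set \<Psi> \<Longrightarrow> G \<in> set (subfms F) \<Longrightarrow> G \<in> set \<Psi>"
  using Psi_closed by blast

lemma subfms_in_Phi: "F \<in> set \<Phi> \<Longrightarrow> G \<in> set (subfms F) \<Longrightarrow> G \<in> set \<Phi>"
  using Phi_closed by blast

lemma prov_chi_lit: "F \<in> set \<Psi> \<Longrightarrow> prov L (Imp (chi S) (lit S F))"
  unfolding chi_def by (rule prov_Conj_imp) simp

lemma entails_if_prov: "prov L A \<Longrightarrow> entails S A"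
  unfolding entails_def using prov_taut_mp[of L A "Imp (chi S) A"] by (simp add: tautology_def)

lemma entails_mp: "entails S A \<Longrightarrow> prov L (Imp A B) \<Longrightarrow> entails S B"
  unfolding entails_def
  using prov_taut_mp2[of L "Imp (chi S) A" "Imp A B" "Imp (chi S) B"] by (simp add: tautology_def)

lemma entails_mp2: "entails S A \<Longrightarrow> entails S B \<Longrightarrow> prov L (Imp A (Imp B C)) \<Longrightarrow> entails S C"
  unfolding entails_def
  using prov_taut_mp3[of L "Imp (chi S) A" "Imp (chi S) B" "Imp A (Imp B C)" "Imp (chi S) C"]
  by (simp add: tautology_def)

lemma entails_taut_mp: "entails S A \<Longrightarrow> tautology (Imp A B) \<Longrightarrow> entails S B"
  using entails_mp prov_taut by blast

lemma entails_taut_mp2: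
  "entails S A \<Longrightarrow> entails S B \<Longrightarrow> tautology (Imp A (Imp B C)) \<Longrightarrow> entails S C"
  using entails_mp2 prov_taut by blast

lemma not_entails_Bot: "mcs S \<Longrightarrow> \<not> entails S Bot"
  unfolding mcs_def consistent_def entails_def Neg_def by simp

lemma entails_if_mem: "F \<in> S \<Longrightarrow> F \<in> set \<Psi> \<Longrightarrow> entails S F"
  using prov_chi_lit[of F S] unfolding entails_def lit_def by simp

lemma entails_Neg_if_not_mem: "F \<notin> S \<Longrightarrow> F \<in> set \<Psi> \<Longrightarrow> entails S (Neg F)"
  using prov_chi_lit[of F S] unfolding entails_def lit_def by simp

lemma entails_iff_mem:
  assumes "mcs S" and "F \<in> set \<Psi>"
  shows "entails S F \<longleftrightarrow> F \<in> S"
proof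
  assume "entails S F"
  show "F \<in> S"
  proof (rule ccontr)
    assume "F \<notin> S"
    then have "entails S (Neg F)"
      using entails_Neg_if_not_mem assms(2) by blast
    with \<open>entails S F\<close> have "entails S Bot"
      by (rule entails_taut_mp2) (simp add: tautology_def Neg_def)
    then show False
      using not_entails_Bot assms(1) by blast
  qed
qed (use assms(2) entails_if_mem in blast)

lemma Bot_not_mem: "mcs S \<Longrightarrow> Bot \<notin> S"
  using entails_if_mem not_entails_Bot Phi_subset_Psi Bot_in_Phi by blast

lemma Top_mem:
  assumes "mcs S" and "Top \<in> set \<Psi>"
  shows "Top \<in> S"
proof -
  have "entails S Top"
    by (rule entails_if_prov, rule prov_taut) (simp add: tautology_def)
  then show ?thesis using entails_iff_mem assms by blast
qed

lemma Imp_mem_iff: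
  assumes "mcs S" and "Imp A B \<in> set \<Psi>"
  shows "Imp A B \<in> S \<longleftrightarrow> (A \<in> S \<longrightarrow> B \<in> S)"
proof -
  have \<Psi>: "A \<in> set \<Psi>" "B \<in> set \<Psi>"
    using subfms_in_Psi[OF assms(2)] subfms_self by auto
  show ?thesis
  proof
    assume "Imp A B \<in> S"
    show "A \<in> S \<longrightarrow> B \<in> S"
    proof
      assume "A \<in> S"
      then have "entails S A" "entails S (Imp A B)"
        using \<open>Imp A B \<in> S\<close> entails_if_mem \<Psi> assms by blast+
      then have "entails S B" by (rule entails_taut_mp2) (simp add: tautology_def)
      then show "B \<in> S" using entails_iff_mem assms \<Psi> by blast
    qed
  next
    assume "A \<in> S \<longrightarrow> B \<in> S"
    then have "entails S B \<or> entails S (Neg A)"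
      using entails_if_mem entails_Neg_if_not_mem \<Psi> by blast
    then have "entails S (Imp A B)"
      by (auto elim!: entails_taut_mp simp: tautology_def Neg_def)
    then show "Imp A B \<in> S" using entails_iff_mem assms by blast
  qed
qed

lemma And_mem_iff:
  assumes "mcs S" and "And A B \<in> set \<Psi>"
  shows "And A B \<in> S \<longleftrightarrow> (A \<in> S \<and> B \<in> S)"
proof -
  have \<Psi>: "A \<in> set \<Psi>" "B \<in> set \<Psi>"
    using subfms_in_Psi[OF assms(2)] subfms_self by auto
  show ?thesis
  proof
    assume "And A B \<in> S"
    then have "entails S (And A B)" using entails_if_mem assms by blast
    then have "entails S A" "entails S B" by (auto elim!: entails_taut_mp simp: tautology_def)
    then show "A \<in> S \<and> B \<in> S" using entails_iff_mem assms \<Psi> by blast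
  next
    assume "A \<in> S \<and> B \<in> S"
    then have "entails S A" "entails S B" using entails_if_mem \<Psi> by blast+
    then have "entails S (And A B)" by (rule entails_taut_mp2) (simp add: tautology_def)
    then show "And A B \<in> S" using entails_iff_mem assms by blast
  qed
qed

lemma Or_mem_iff:
  assumes "mcs S" and "Or A B \<in> set \<Psi>"
  shows "Or A B \<in> S \<longleftrightarrow> (A \<in> S \<or> B \<in> S)"
proof -
  have \<Psi>: "A \<in> set \<Psi>" "B \<in> set \<Psi>"
    using subfms_in_Psi[OF assms(2)] subfms_self by auto
  show ?thesis
  proof
    assume "Or A B \<in> S"
    show "A \<in> S \<or> B \<in> S"
    proof (rule ccontr)
      assume "\<not> (A \<in> S \<or> B \<in> S)"
      then have "entails S (Neg A)" "entails S (Neg B)"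
        using entails_Neg_if_not_mem \<Psi> by blast+
      moreover have "entails S (Or A B)" using \<open>Or A B \<in> S\<close> entails_if_mem assms by blast
      ultimately have "entails S B"
        by (intro entails_taut_mp2[of S "Neg A" "Or A B" B]) (simp_all add: tautology_def Neg_def)
      then have "entails S Bot" using \<open>entails S (Neg B)\<close>
        by (rule entails_taut_mp2) (simp add: tautology_def Neg_def)
      then show False using not_entails_Bot assms by blast
    qed
  next
    assume "A \<in> S \<or> B \<in> S"
    then have "entails S A \<or> entails S B" using entails_if_mem \<Psi> by blast
    then have "entails S (Or A B)" by (auto elim!: entails_taut_mp simp: tautology_def)
    then show "Or A B \<in> S" using entails_iff_mem assms by blast
  qed
qed

lemma Disj_mem: "mcs S \<Longrightarrow> Disj Fs \<in> set \<Psi> \<Longrightarrow> F \<in> set Fs \<Longrightarrow> F \<in> S \<Longrightarrow> Disj Fs \<in> S"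
proof (induction Fs)
  case (Cons G Fs)
  have "G \<in> set \<Psi>" "Disj Fs \<in> set \<Psi>"
    using subfms_in_Psi[OF Cons.prems(2)] subfms_self by auto
  then show ?case using Cons Or_mem_iff[of S G "Disj Fs"] by auto
qed simp

lemma consistent_with_lits:
  "distinct Fs \<Longrightarrow> consistent L X \<Longrightarrow>
    \<exists>S. S \<subseteq> set Fs \<and> consistent L (And X (Conj (map (lit S) Fs)))"
proof (induction Fs arbitrary: X)
  case Nil
  then show ?case
    using consistent_mono[OF Nil(2), of "And X Top"] by (auto simp: prov_taut tautology_def)
next
  case (Cons F Fs)
  have "consistent L (And X F) \<or> consistent L (And X (Neg F))"
  proof (rule ccontr)
    assume "\<not> ?thesis"
    then have "prov L (Neg (And X F))" "prov L (Neg (And X (Neg F)))"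
      unfolding consistent_def by auto
    then have "prov L (Neg X)" by (rule prov_taut_mp2) (auto simp: tautology_def Neg_def)
    then show False using Cons.prems unfolding consistent_def by blast
  qed
  then show ?case
  proof
    assume "consistent L (And X F)"
    then obtain S where S: "S \<subseteq> set Fs" "consistent L (And (And X F) (Conj (map (lit S) Fs)))"
      using Cons.IH Cons.prems by auto
    have "F \<notin> set Fs" using Cons.prems by simp
    then have lits: "map (lit (insert F S)) Fs = map (lit S) Fs"
      unfolding lit_def by (auto intro!: map_cong)
    have "consistent L (And X (Conj (map (lit (insert F S)) (F # Fs))))"
      using consistent_mono[OF S(2)] by (simp add: lits lit_def prov_taut tautology_def)
    then show ?thesis using S by (intro exI[of _ "insert F S"]) auto
  next
    assume "consistent L (And X (Neg F))"
    then obtain S where S: "S \<subseteq> set Fs" "consistent L (And (And X (Neg F)) (Conj (map (lit S) Fs)))"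
      using Cons.IH Cons.prems by auto
    have "F \<notin> S" using Cons.prems S by auto
    then have "consistent L (And X (Conj (map (lit S) (F # Fs))))"
      using consistent_mono[OF S(2)] by (simp add: lit_def prov_taut tautology_def)
    then show ?thesis using S by (intro exI[of _ S]) auto
  qed
qed

lemma lindenbaum: "consistent L X \<Longrightarrow> \<exists>S. mcs S \<and> consistent L (And X (chi S))"
proof -
  assume "consistent L X"
  then obtain S where S: "S \<subseteq> set \<Psi>" "consistent L (And X (chi S))"
    using consistent_with_lits[OF distinct_Psi] unfolding chi_def by blast
  have "consistent L (chi S)"
    using S(2) by (rule consistent_mono) (auto simp: prov_taut tautology_def)
  then show ?thesis using S unfolding mcs_def by blast
qed

lemma mem_if_consistent_with:
  assumes "consistent L (And X (chi S))" and "F \<in> set \<Psi>" and "prov L (Imp X F)"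
  shows "F \<in> S"
proof (rule ccontr)
  assume "F \<notin> S"
  then have "entails S (Neg F)" using entails_Neg_if_not_mem assms(2) by blast
  then have "prov L (Neg (And X (chi S)))"
    using assms(3) unfolding entails_def by (rule prov_taut_mp2) (auto simp: tautology_def Neg_def)
  then show False using assms(1) unfolding consistent_def by blast
qed

lemma not_mem_if_consistent_with:
  assumes "consistent L (And X (chi S))" and "F \<in> set \<Psi>" and "prov L (Imp X (Neg F))"
  shows "F \<notin> S"
proof
  assume "F \<in> S"
  then have "entails S F" using entails_if_mem assms(2) by blast
  then have "prov L (Neg (And X (chi S)))"
    using assms(3) unfolding entails_def by (rule prov_taut_mp2) (auto simp: tautology_def Neg_def)
  then show False using assms(1) unfolding consistent_def by blast
qed

end

fun box_content :: "fm \<Rightarrow> fm" where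
  "box_content (Box C) = And (Box C) C"
| "box_content _ = Top"

context adequate_sets
begin

definition box_prec :: "fm set \<Rightarrow> fm set \<Rightarrow> bool" (infix "\<prec>" 50) where
  "G \<prec> D \<longleftrightarrow> (\<forall>C. Box C \<in> G \<longrightarrow> Box C \<in> D \<and> C \<in> D) \<and> (\<exists>C. Box C \<in> D \<and> Box C \<notin> G)"

lemma box_prec_trans: "G \<prec> D \<Longrightarrow> D \<prec> D' \<Longrightarrow> G \<prec> D'"
  unfolding box_prec_def by blast

lemma box_prec_irrefl: "\<not> G \<prec> G"
  unfolding box_prec_def by blast

lemma entails_Box_Conj: "(\<forall>F\<in>set Fs. entails S (Box F)) \<Longrightarrow> entails S (Box (Conj Fs))"
proof (induction Fs)
  case Nil
  show ?case
    by (simp, rule entails_if_prov, rule prov_nec, rule prov_taut) (simp add: tautology_def)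
next
  case (Cons F Fs)
  then show ?case
    using entails_mp2[OF _ _ prov_box_conj] by simp
qed

lemma entails_Box_box_content:
  assumes "H \<in> S" and "H \<in> set \<Psi>"
  shows "entails S (Box (box_content H))"
proof (cases "\<exists>C. H = Box C")
  case True
  then obtain C where C: "H = Box C" by blast
  then have "entails S (Box C)"
    using assms entails_if_mem by blast
  moreover from this have "entails S (Box (Box C))"
    using prov_box_4 entails_mp by blast
  ultimately have "entails S (Box (And (Box C) C))"
    using prov_box_conj entails_mp2 by blast
  then show ?thesis
    using C by simp
next
  case False
  then have "box_content H = Top"
    by (cases H) auto
  then show ?thesis
    by (simp, intro entails_if_prov prov_nec prov_taut) (simp add: tautology_def)
qed

text \<open>Loeb's axiom makes the set of requirements below consistent: otherwise \<open>G\<close> would entail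
  \<open>\<box>(\<box>Z \<rightarrow> Z)\<close> and hence \<open>\<box>Z\<close>.\<close>

lemma exists_box_successor:
  assumes G: "mcs G" and Z: "Box Z \<in> set \<Psi>" and not_entailed: "\<not> entails G (Box Z)"
  shows "\<exists>D. mcs D \<and> G \<prec> D \<and> Z \<notin> D"
proof -
  define content where "content = Conj (map box_content (filter (\<lambda>F. F \<in> G) \<Psi>))"
  define X where "X = And content (And (Neg Z) (Box Z))"
  have "entails G (Box content)"
    unfolding content_def by (rule entails_Box_Conj) (auto intro: entails_Box_box_content)
  have "consistent L X"
    unfolding consistent_def
  proof
    assume "prov L (Neg X)"
    then have "prov L (Imp content (Imp (Box Z) Z))"
      unfolding X_def by (rule prov_taut_mp) (auto simp: tautology_def Neg_def)
    then have "entails G (Box (Imp (Box Z) Z))"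
      using \<open>entails G (Box content)\<close> entails_mp prov_box_mono by blast
    then show False
      using entails_mp[OF _ prov_Loeb] not_entailed by blast
  qed
  then obtain D where D: "mcs D" "consistent L (And X (chi D))"
    using lindenbaum by blast
  have "Box C \<in> D \<and> C \<in> D" if "Box C \<in> G" for C
  proof -
    have C: "Box C \<in> set \<Psi>" "C \<in> set \<Psi>"
      using that G subfms_in_Psi[of "Box C"] subfms_self unfolding mcs_def by auto
    then have "And (Box C) C \<in> set (map box_content (filter (\<lambda>F. F \<in> G) \<Psi>))"
      using that by (auto intro!: image_eqI[where x = "Box C"])
    then have "prov L (Imp content (And (Box C) C))"
      unfolding content_def by (rule prov_Conj_imp)
    then have "prov L (Imp X (Box C))" "prov L (Imp X C)"
      unfolding X_def by (auto elim!: prov_taut_mp simp: tautology_def)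
    then show ?thesis
      using mem_if_consistent_with[OF D(2)] C by blast
  qed
  moreover have "Box Z \<in> D"
    using mem_if_consistent_with[OF D(2) Z] by (simp add: X_def prov_taut tautology_def)
  moreover have "Box Z \<notin> G"
    using not_entailed entails_if_mem Z by blast
  moreover have "Z \<notin> D"
    using not_mem_if_consistent_with[OF D(2)] subfms_in_Psi[OF Z, of Z]
    by (simp add: X_def prov_taut tautology_def)
  ultimately show ?thesis
    using D(1) unfolding box_prec_def by blast
qed

definition critical :: "fm set \<Rightarrow> fm \<Rightarrow> fm set \<Rightarrow> bool" where
  "critical G E D \<longleftrightarrow> (\<forall>A\<in>set \<Phi>. A \<in> D \<longrightarrow> \<not> entails G (Rhd A E))"

lemma critical_Bot:
  assumes "mcs G" and D: "mcs D" and "G \<prec> D"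
  shows "critical G Bot D"
  unfolding critical_def
proof (intro ballI impI notI)
  fix A
  assume "A \<in> set \<Phi>" "A \<in> D" "entails G (Rhd A Bot)"
  have Psi: "Box (Imp A (Or Bot Bot)) \<in> set \<Psi>"
    using box_witness_in_Psi[of A Bot "\<lambda>_. False"] \<open>A \<in> set \<Phi>\<close> Bot_in_Phi by simp
  then have "Imp A (Or Bot Bot) \<in> set \<Psi>" "Or Bot Bot \<in> set \<Psi>"
    using subfms_in_Psi by auto
  have "Box (Imp A (Or Bot Bot)) \<in> G"
    using entails_mp[OF \<open>entails G (Rhd A Bot)\<close> prov_Rhd_Bot_box] entails_iff_mem assms(1) Psi
    by blast
  then have "Imp A (Or Bot Bot) \<in> D"
    using \<open>G \<prec> D\<close> unfolding box_prec_def by blast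
  then have "Bot \<in> D"
    using Imp_mem_iff[OF D] Or_mem_iff[OF D] \<open>A \<in> D\<close>
      \<open>Imp A (Or Bot Bot) \<in> set \<Psi>\<close> \<open>Or Bot Bot \<in> set \<Psi>\<close> by blast
  then show False
    using Bot_not_mem D by blast
qed

lemma entails_Rhd_Disj_filter: "entails G (Rhd (Disj (filter (\<lambda>A. entails G (Rhd A E)) Fs)) E)"
proof (induction Fs)
  case Nil
  show ?case by (simp add: entails_if_prov prov_Bot_Rhd)
next
  case (Cons A Fs)
  let ?D = "Disj (filter (\<lambda>A. entails G (Rhd A E)) Fs)"
  show ?case
  proof (cases "entails G (Rhd A E)")
    case True
    have "prov L (Imp (Rhd A E) (Imp (Rhd ?D E) (Rhd (Or A ?D) E)))"
      using prov_J3[of L A E ?D] by (rule prov_taut_mp) (simp add: tautology_def)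
    with True Cons.IH have "entails G (Rhd (Or A ?D) E)"
      by (rule entails_mp2)
    then show ?thesis
      using True by simp
  next
    case False
    then show ?thesis
      using Cons.IH by simp
  qed
qed

lemma exists_critical_successor:
  assumes G: "mcs G" and "P \<in> set \<Phi>" and "Q \<in> set \<Phi>"
    and not_entailed:
      "\<not> entails G (Box (Imp P (Or (Disj (filter (\<lambda>A. entails G (Rhd A E)) \<Phi>)) Q)))"
  shows "\<exists>D. mcs D \<and> G \<prec> D \<and> P \<in> D \<and> Q \<notin> D \<and> critical G E D"
proof -
  let ?D = "Disj (filter (\<lambda>A. entails G (Rhd A E)) \<Phi>)"
  have Z: "Box (Imp P (Or ?D Q)) \<in> set \<Psi>"
    using box_witness_in_Psi assms(2,3) by blast
  then have Psi: "Imp P (Or ?D Q) \<in> set \<Psi>" "Or ?D Q \<in> set \<Psi>" "?D \<in> set \<Psi>"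
    using subfms_in_Psi by simp_all
  obtain D where D: "mcs D" "G \<prec> D" "Imp P (Or ?D Q) \<notin> D"
    using exists_box_successor[OF G Z not_entailed] by blast
  then have "P \<in> D" and "Or ?D Q \<notin> D"
    using Imp_mem_iff[OF D(1) Psi(1)] by simp_all
  then have "?D \<notin> D" and "Q \<notin> D"
    using Or_mem_iff[OF D(1) Psi(2)] by simp_all
  moreover have "critical G E D"
    unfolding critical_def
  proof (intro ballI impI notI)
    fix A
    assume "A \<in> set \<Phi>" "A \<in> D" "entails G (Rhd A E)"
    then have "?D \<in> D"
      using Disj_mem[OF D(1) Psi(3)] by simp
    with \<open>?D \<notin> D\<close> show False ..
  qed
  ultimately show ?thesis
    using D \<open>P \<in> D\<close> by blast
qed

lemma exists_Rhd_refuting_successor: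
  assumes G: "mcs G" and AB: "Rhd A B \<in> set \<Phi>" and "Rhd A B \<notin> G"
  shows "\<exists>D. mcs D \<and> G \<prec> D \<and> A \<in> D \<and> (L = CL \<longrightarrow> B \<notin> D) \<and> critical G B D"
proof -
  have A: "A \<in> set \<Phi>" and B: "B \<in> set \<Phi>"
    using subfms_in_Phi[OF AB] by simp_all
  define Q where "Q = (if L = CL then B else Bot)"
  let ?D = "Disj (filter (\<lambda>A'. entails G (Rhd A' B)) \<Phi>)"
  have not_entailed: "\<not> entails G (Box (Imp A (Or ?D Q)))"
  proof
    assume "entails G (Box (Imp A (Or ?D Q)))"
    moreover have "entails G (Rhd (Or ?D Q) B)"
    proof -
      have "prov L (Imp (Rhd ?D B) (Imp (Rhd Q B) (Rhd (Or ?D Q) B)))"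
        using prov_J3[of L ?D B Q] by (rule prov_taut_mp) (simp add: tautology_def)
      moreover have "entails G (Rhd Q B)"
        unfolding Q_def by (rule entails_if_prov, rule prov_Rhd_self_if_CL)
      ultimately show ?thesis
        using entails_Rhd_Disj_filter entails_mp2 by blast
    qed
    ultimately have "entails G (Rhd A B)"
      using entails_mp2 prov_box_imp_Rhd_left by blast
    then show False
      using assms entails_iff_mem Phi_subset_Psi by blast
  qed
  have "Q \<in> set \<Phi>"
    using B Bot_in_Phi by (simp add: Q_def)
  then obtain D where "mcs D" "G \<prec> D" "A \<in> D" "Q \<notin> D" "critical G B D"
    using exists_critical_successor[OF G A _ not_entailed] by blast
  then show ?thesis
    by (auto simp: Q_def)
qed

lemma exists_Rhd_successor:
  assumes G: "mcs G" and "B \<in> set \<Phi>" and "E \<in> set \<Phi>"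
    and "entails G (Rhd A B)" and "\<not> entails G (Rhd A E)"
  shows "\<exists>D. mcs D \<and> G \<prec> D \<and> B \<in> D \<and> E \<notin> D \<and> critical G E D"
proof -
  let ?D = "Disj (filter (\<lambda>A'. entails G (Rhd A' E)) \<Phi>)"
  have "\<not> entails G (Box (Imp B (Or ?D E)))"
  proof
    assume "entails G (Box (Imp B (Or ?D E)))"
    then have "entails G (Imp (Rhd A B) (Imp (Rhd ?D E) (Rhd A E)))"
      using entails_mp prov_box_Or_Rhd_trans by blast
    then have "entails G (Imp (Rhd ?D E) (Rhd A E))"
      using assms(4) by (rule entails_taut_mp2) (simp add: tautology_def)
    then have "entails G (Rhd A E)"
      using entails_Rhd_Disj_filter[of G E \<Phi>] by (rule entails_taut_mp2) (simp add: tautology_def)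
    then show False
      using assms(5) by blast
  qed
  then show ?thesis
    using exists_critical_successor[OF G assms(2,3)] by blast
qed

end

section \<open>The canonical model\<close>

context adequate_sets
begin

definition canW :: "(fm set \<times> fm set \<times> fm) set" where
  "canW = {(G, D, E). mcs G \<and> mcs D \<and> E \<in> set \<Phi> \<and> (L = CL \<longrightarrow> E \<notin> D)
    \<and> (G \<prec> D \<longrightarrow> critical G E D)}"

definition canR :: "(fm set \<times> fm set \<times> fm) rel" where
  "canR = {((G, D, E), (G', D', E')). (G, D, E) \<in> canW \<and> (G', D', E') \<in> canW
    \<and> (D = G' \<or> D \<prec> G') \<and> D \<prec> D'}"

definition canS :: "(fm set \<times> fm set \<times> fm) rel" where
  "canS = {((G, D, E), (G', D', E')). (G, D, E) \<in> canW \<and> (G', D', E') \<in> canW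
    \<and> (G' = G \<and> E' = E \<and> E \<notin> D' \<or> G' \<prec> G \<and> E' = Bot)}"

definition canV :: "nat \<Rightarrow> fm set \<times> fm set \<times> fm \<Rightarrow> bool" where
  "canV p = (\<lambda>(G, D, E). Var p \<in> D)"

abbreviation can_forces :: "fm set \<times> fm set \<times> fm \<Rightarrow> fm \<Rightarrow> bool" where
  "can_forces \<equiv> forces canR canS canV"

lemma forces_Box_iff:
  assumes IH: "\<And>G D E. (G, D, E) \<in> canW \<Longrightarrow> can_forces (G, D, E) C \<longleftrightarrow> C \<in> D"
    and "Box C \<in> set \<Phi>" and W: "(G, D, E) \<in> canW"
  shows "can_forces (G, D, E) (Box C) \<longleftrightarrow> Box C \<in> D"
proof
  have D: "mcs D"
    using W by (simp add: canW_def)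
  have "Box C \<in> set \<Psi>"
    using \<open>Box C \<in> set \<Phi>\<close> Phi_subset_Psi by blast
  assume forces: "can_forces (G, D, E) (Box C)"
  show "Box C \<in> D"
  proof (rule ccontr)
    assume "Box C \<notin> D"
    then obtain D' where D': "mcs D'" "D \<prec> D'" "C \<notin> D'"
      using exists_box_successor[OF D \<open>Box C \<in> set \<Psi>\<close>] entails_iff_mem[OF D \<open>Box C \<in> set \<Psi>\<close>]
      by blast
    have W': "(D, D', Bot) \<in> canW"
      using D D' Bot_in_Phi Bot_not_mem[OF D'(1)] critical_Bot[OF D D'(1,2)] by (simp add: canW_def)
    then have "((G, D, E), (D, D', Bot)) \<in> canR"
      using W D' by (simp add: canR_def)
    then have "can_forces (D, D', Bot) C"
      using forces by simp
    then show False
      using IH[OF W'] D'(3) by simp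
  qed
next
  assume "Box C \<in> D"
  show "can_forces (G, D, E) (Box C)"
  proof (simp only: forces.simps, intro allI impI)
    fix y
    assume "((G, D, E), y) \<in> canR"
    moreover obtain G' D' E' where y: "y = (G', D', E')"
      by (cases y)
    ultimately have "y \<in> canW" and "D \<prec> D'"
      by (simp_all add: canR_def)
    then show "can_forces y C"
      using IH \<open>Box C \<in> D\<close> y unfolding box_prec_def by blast
  qed
qed

text \<open>If \<open>A \<rhd> B \<notin> D\<close>, a \<open>B\<close>-critical successor \<open>D'\<close> of \<open>D\<close> containing \<open>A\<close> gives the
  \<open>R\<close>-successor \<open>(D, D', B)\<close> forcing \<open>A\<close>. An \<open>S\<close>-successor of it that is also an
  \<open>R\<close>-successor of \<open>(G, D, E)\<close> cannot have a parent \<open>\<prec> D\<close>, so it keeps the parent \<open>D\<close>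
  and avoids \<open>B\<close>.\<close>

lemma mem_Rhd_if_forces:
  assumes IH_A: "\<And>G D E. (G, D, E) \<in> canW \<Longrightarrow> can_forces (G, D, E) A \<longleftrightarrow> A \<in> D"
    and IH_B: "\<And>G D E. (G, D, E) \<in> canW \<Longrightarrow> can_forces (G, D, E) B \<longleftrightarrow> B \<in> D"
    and AB: "Rhd A B \<in> set \<Phi>" and W: "(G, D, E) \<in> canW"
    and forces: "can_forces (G, D, E) (Rhd A B)"
  shows "Rhd A B \<in> D"
proof (rule ccontr)
  assume "Rhd A B \<notin> D"
  have D: "mcs D"
    using W by (simp add: canW_def)
  obtain D' where D': "mcs D'" "D \<prec> D'" "A \<in> D'" "L = CL \<longrightarrow> B \<notin> D'" "critical D B D'"
    using exists_Rhd_refuting_successor[OF D AB \<open>Rhd A B \<notin> D\<close>] by blast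
  have W': "(D, D', B) \<in> canW"
    using D D' subfms_in_Phi[OF AB] by (simp add: canW_def)
  then have "((G, D, E), (D, D', B)) \<in> canR"
    using W D' by (simp add: canR_def)
  moreover have "can_forces (D, D', B) A"
    using IH_A[OF W'] D'(3) by simp
  ultimately obtain z where z: "((G, D, E), z) \<in> canR" "((D, D', B), z) \<in> canS" "can_forces z B"
    using forces by (simp only: forces.simps) blast
  obtain G'' D'' E'' where z_def: "z = (G'', D'', E'')"
    by (cases z)
  have "z \<in> canW" and "D = G'' \<or> D \<prec> G''"
    using z(1) by (simp_all add: z_def canR_def)
  then have "\<not> G'' \<prec> D"
    using box_prec_irrefl box_prec_trans by blast
  then have "B \<notin> D''"
    using z(2) by (simp add: z_def canS_def)
  then show False
    using z(3) IH_B \<open>z \<in> canW\<close> by (simp add: z_def)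
qed

lemma canR_canS_successor:
  assumes W: "(G, D, E) \<in> canW" and y: "((G, D, E), (G', D', E')) \<in> canR"
    and "mcs D''" "D \<prec> D''" "E'' \<in> set \<Phi>" "E'' \<notin> D''" "critical D E'' D''"
    and "D = G' \<and> E'' = E' \<or> D \<prec> G' \<and> E'' = Bot"
  shows "((G, D, E), (D, D'', E'')) \<in> canR \<and> ((G', D', E'), (D, D'', E'')) \<in> canS"
proof -
  have "(D, D'', E'') \<in> canW"
    using W assms(3-7) by (simp add: canW_def)
  then show ?thesis
    using W y assms(4,6,8) by (auto simp: canR_def canS_def)
qed

text \<open>Conversely, an \<open>R\<close>-successor \<open>(G', D', E')\<close> forcing \<open>A\<close> is answered by an
  \<open>E'\<close>-critical successor of \<open>D\<close> containing \<open>B\<close> if \<open>G' = D\<close>, and by a \<open>\<bottom>\<close>-critical one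
  if \<open>D \<prec> G'\<close>.\<close>

lemma forces_Rhd_if_mem:
  assumes IH_A: "\<And>G D E. (G, D, E) \<in> canW \<Longrightarrow> can_forces (G, D, E) A \<longleftrightarrow> A \<in> D"
    and IH_B: "\<And>G D E. (G, D, E) \<in> canW \<Longrightarrow> can_forces (G, D, E) B \<longleftrightarrow> B \<in> D"
    and AB: "Rhd A B \<in> set \<Phi>" and W: "(G, D, E) \<in> canW"
    and "Rhd A B \<in> D"
  shows "can_forces (G, D, E) (Rhd A B)"
proof (simp only: forces.simps split_paired_All, intro allI impI, elim conjE)
  fix G' D' E'
  assume y: "((G, D, E), (G', D', E')) \<in> canR" and "can_forces (G', D', E') A"
  have D: "mcs D"
    using W by (simp add: canW_def)
  have A: "A \<in> set \<Phi>" and B: "B \<in> set \<Phi>"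
    using subfms_in_Phi[OF AB] by simp_all
  have AB_entailed: "entails D (Rhd A B)"
    using \<open>Rhd A B \<in> D\<close> AB Phi_subset_Psi entails_if_mem by blast
  have "(G', D', E') \<in> canW" and "D = G' \<or> D \<prec> G'" and "D \<prec> D'"
    using y by (simp_all add: canR_def)
  then have "mcs D'" "A \<in> D'" "E' \<in> set \<Phi>" and crit: "G' \<prec> D' \<Longrightarrow> critical G' E' D'"
    using \<open>can_forces (G', D', E') A\<close> IH_A by (simp_all add: canW_def)
  obtain D'' E'' where D'': "mcs D''" "D \<prec> D''" "E'' \<in> set \<Phi>" "E'' \<notin> D''"
    "critical D E'' D''" "D = G' \<and> E'' = E' \<or> D \<prec> G' \<and> E'' = Bot" and "B \<in> D''"
  proof (cases "D = G'")
    case True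
    then have "\<not> entails D (Rhd A E')"
      using crit \<open>D \<prec> D'\<close> \<open>A \<in> D'\<close> A unfolding critical_def by blast
    then obtain D'' where "mcs D''" "D \<prec> D''" "B \<in> D''" "E' \<notin> D''" "critical D E' D''"
      using exists_Rhd_successor[OF D B \<open>E' \<in> set \<Phi>\<close> AB_entailed] by blast
    then show ?thesis
      using that[of D'' E'] \<open>E' \<in> set \<Phi>\<close> True by blast
  next
    case False
    have "\<not> entails D (Rhd A Bot)"
      using critical_Bot[OF D \<open>mcs D'\<close> \<open>D \<prec> D'\<close>] \<open>A \<in> D'\<close> A unfolding critical_def by blast
    then obtain D'' where "mcs D''" "D \<prec> D''" "B \<in> D''" "Bot \<notin> D''" "critical D Bot D''"
      using exists_Rhd_successor[OF D B Bot_in_Phi AB_entailed] by blast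
    then show ?thesis
      using that[of D'' Bot] Bot_in_Phi False \<open>D = G' \<or> D \<prec> G'\<close> by blast
  qed
  have edges: "((G, D, E), (D, D'', E'')) \<in> canR \<and> ((G', D', E'), (D, D'', E'')) \<in> canS"
    using canR_canS_successor[OF W y D''] .
  then have "can_forces (D, D'', E'') B"
    using IH_B \<open>B \<in> D''\<close> by (simp add: canR_def)
  with edges show "\<exists>z. ((G, D, E), z) \<in> canR \<and> ((G', D', E'), z) \<in> canS \<and> can_forces z B"
    by blast
qed

lemma truth_lemma:
  "F \<in> set \<Phi> \<Longrightarrow> (G, D, E) \<in> canW \<Longrightarrow> can_forces (G, D, E) F \<longleftrightarrow> F \<in> D"
proof (induction F arbitrary: G D E)
  case (Var p)
  then show ?case by (simp add: canV_def)
next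
  case Top
  then show ?case using Top_mem Phi_subset_Psi by (auto simp: canW_def)
next
  case Bot
  then show ?case using Bot_not_mem by (auto simp: canW_def)
next
  case (Imp F1 F2)
  have "mcs D" "Imp F1 F2 \<in> set \<Psi>"
    using Imp.prems Phi_subset_Psi by (auto simp: canW_def)
  then show ?case
    using Imp.IH[OF _ Imp.prems(2)] subfms_in_Phi[OF Imp.prems(1)] Imp_mem_iff by simp
next
  case (Or F1 F2)
  have "mcs D" "Or F1 F2 \<in> set \<Psi>"
    using Or.prems Phi_subset_Psi by (auto simp: canW_def)
  then show ?case
    using Or.IH[OF _ Or.prems(2)] subfms_in_Phi[OF Or.prems(1)] Or_mem_iff by simp
next
  case (And F1 F2)
  have "mcs D" "And F1 F2 \<in> set \<Psi>"
    using And.prems Phi_subset_Psi by (auto simp: canW_def)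
  then show ?case
    using And.IH[OF _ And.prems(2)] subfms_in_Phi[OF And.prems(1)] And_mem_iff by simp
next
  case (Box C)
  have "C \<in> set \<Phi>"
    using subfms_in_Phi[OF Box.prems(1)] by simp
  show ?case
    using forces_Box_iff[OF Box.IH[OF \<open>C \<in> set \<Phi>\<close>] Box.prems(1,2)] .
next
  case (Rhd A B)
  have "A \<in> set \<Phi>" "B \<in> set \<Phi>"
    using subfms_in_Phi[OF Rhd.prems(1)] by simp_all
  note IH = Rhd.IH(1)[OF \<open>A \<in> set \<Phi>\<close>] Rhd.IH(2)[OF \<open>B \<in> set \<Phi>\<close>]
  show ?case
    using mem_Rhd_if_forces[OF IH Rhd.prems] forces_Rhd_if_mem[OF IH Rhd.prems] by blast
qed

lemma finite_canW: "finite canW"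
proof (rule finite_subset)
  show "canW \<subseteq> Pow (set \<Psi>) \<times> Pow (set \<Psi>) \<times> set \<Phi>"
    by (auto simp: canW_def mcs_def)
qed simp

lemma trans_canR: "trans canR"
  unfolding trans_def canR_def by (auto intro: box_prec_trans)

lemma wf_converse_canR: "wf (canR\<inverse>)"
proof (rule finite_acyclic_wf_converse)
  have "canR \<subseteq> canW \<times> canW"
    by (auto simp: canR_def)
  then show "finite canR"
    using finite_canW finite_subset by blast
  have "(x, x) \<notin> canR" for x
    using box_prec_irrefl by (auto simp: canR_def)
  then show "acyclic canR"
    unfolding acyclic_def using trancl_id[OF trans_canR] by simp
qed

lemma L_frame_canonical:
  assumes "canW \<noteq> {}"
  shows "L_frame L canW canR canS"
proof -
  have "simplified_frame canW canR canS"
    unfolding simplified_frame_def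
    using assms trans_canR wf_converse_canR by (auto simp: canR_def canS_def)
  moreover have "trans canS"
    unfolding trans_def canS_def by (auto intro: box_prec_trans)
  moreover have "L = CL \<longrightarrow> refl_on canW canS"
    unfolding refl_on_def canS_def canW_def by auto
  ultimately show ?thesis
    by (cases L) auto
qed

lemma canonical_countermodel:
  assumes "A \<in> set \<Phi>" and "\<not> prov L A"
  shows "\<exists>x\<in>canW. \<not> can_forces x A"
proof -
  have "consistent L (Neg A)"
    unfolding consistent_def
    using \<open>\<not> prov L A\<close> prov_taut_mp[of L "Neg (Neg A)" A] by (auto simp: tautology_def Neg_def)
  then obtain G where G: "mcs G" "consistent L (And (Neg A) (chi G))"
    using lindenbaum by blast
  then have "A \<notin> G"
    using not_mem_if_consistent_with assms(1) Phi_subset_Psi by (auto simp: prov_taut tautology_def)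
  moreover have "(G, G, Bot) \<in> canW"
    using G Bot_in_Phi Bot_not_mem[OF G(1)] box_prec_irrefl by (simp add: canW_def)
  ultimately show ?thesis
    using truth_lemma[OF assms(1)] by blast
qed

end

section \<open>Completeness\<close>

lemma adequate_sets_exist: "\<exists>\<Phi> \<Psi>. adequate_sets \<Phi> \<Psi> \<and> A \<in> set \<Phi>"
proof -
  define \<Phi> where "\<Phi> = Bot # subfms A"
  define sublists where "sublists = {Fs. set Fs \<subseteq> set \<Phi> \<and> length Fs \<le> length \<Phi>}"
  define witnesses where
    "witnesses = (\<lambda>(P, Q, Fs). Box (Imp P (Or (Disj Fs) Q))) ` (set \<Phi> \<times> set \<Phi> \<times> sublists)"
  define generators where "generators = set \<Phi> \<union> witnesses"
  define \<Psi>_set where "\<Psi>_set = \<Union> ((set \<circ> subfms) ` generators)"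
  have "finite sublists"
    unfolding sublists_def by (rule finite_lists_length_le) simp
  then have "finite \<Psi>_set"
    unfolding \<Psi>_set_def generators_def witnesses_def by simp
  then obtain \<Psi> where \<Psi>: "set \<Psi> = \<Psi>_set" "distinct \<Psi>"
    using finite_distinct_list by blast
  have in_\<Psi>: "F \<in> set \<Psi>" if "F \<in> generators" for F
    using that subfms_self unfolding \<Psi> \<Psi>_set_def by fastforce
  have "adequate_sets \<Phi> \<Psi>"
  proof
    show "distinct \<Psi>" by fact
    show "set \<Phi> \<subseteq> set \<Psi>"
      using in_\<Psi> unfolding generators_def by blast
    show "set (subfms F) \<subseteq> set \<Psi>" if "F \<in> set \<Psi>" for F
      using that subfms_subset unfolding \<Psi> \<Psi>_set_def by auto
    show "set (subfms F) \<subseteq> set \<Phi>" if "F \<in> set \<Phi>" for F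
      using that subfms_subset unfolding \<Phi>_def by auto
    show "Bot \<in> set \<Phi>"
      unfolding \<Phi>_def by simp
    show "Box (Imp P (Or (Disj (filter f \<Phi>)) Q)) \<in> set \<Psi>"
      if "P \<in> set \<Phi>" "Q \<in> set \<Phi>" for P Q f
    proof -
      have "filter f \<Phi> \<in> sublists"
        unfolding sublists_def by auto
      then have "Box (Imp P (Or (Disj (filter f \<Phi>)) Q)) \<in> witnesses"
        using that unfolding witnesses_def by force
      then show ?thesis
        using in_\<Psi> unfolding generators_def by blast
    qed
  qed
  moreover have "A \<in> set \<Phi>"
    unfolding \<Phi>_def by simp
  ultimately show ?thesis by blast
qed

lemma valid_finite_frames_nat_imp_prov:
  assumes valid: "valid_finite_frames L TYPE(nat) A"
  shows "prov L A"
proof (rule ccontr)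
  assume "\<not> prov L A"
  obtain \<Phi> \<Psi> where "adequate_sets \<Phi> \<Psi>" and "A \<in> set \<Phi>"
    using adequate_sets_exist by blast
  interpret adequate_sets L \<Phi> \<Psi>
    by fact
  obtain x where "x \<in> canW" and "\<not> forces canR canS canV x A"
    using canonical_countermodel[OF \<open>A \<in> set \<Phi>\<close> \<open>\<not> prov L A\<close>] by blast
  moreover have "valid_in canW canR canS A"
    using \<open>x \<in> canW\<close>
    by (intro valid_finite_frames_nat_imp_valid_in[OF valid L_frame_canonical finite_canW]) blast
  ultimately show False
    unfolding valid_in_def by blast
qed

theorem theorem3p2:
  fixes L :: logic and A :: fm
  shows "(prov L A \<longrightarrow> valid_all_frames L TYPE('w) A)
       \<and> (prov L A \<longleftrightarrow> valid_all_frames L TYPE(nat) A)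
       \<and> (prov L A \<longleftrightarrow> valid_finite_frames L TYPE(nat) A)"
proof -
  have "valid_all_frames L TYPE(nat) A \<Longrightarrow> valid_finite_frames L TYPE(nat) A"
    unfolding valid_all_frames_def valid_finite_frames_def by blast
  then show ?thesis
    using prov_valid_all_frames[of L A, where 'w = 'w] prov_valid_all_frames[of L A, where 'w = nat]
      valid_finite_frames_nat_imp_prov[of L A] by blast
qed

end
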